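(* The spectrum of the reflection monodromy matrix $\mathcal{T}(z)$ is preserved under the Hamiltonian flows (on the symplectic manifold $M_{2N}$) of each reflection Hamiltonian $P_k$, $0\le k\le N$. In particular, the coefficients of the characteristic polynomial $\det(\zeta-\mathcal{T}(z))$ (as a function of $\zeta$ and $z$) are invariant under these flows.
   Context: $SL_2^*$ denotes the Poisson variety with coordinate ring $\mathbf{C}[e,f,k^{\pm1}]$ and Poisson brackets $\{k,e\}=ke$, $\{k,f\}=-kf$, $\{e,f\}=2(k^2-k^{-2})$; $\omega=k^2+k^{-2}+ef$ is a Casimir and $\Sigma_t=\{\omega=t\}$ is a symplectic leaf. Fix $N\ge1$, $t_1,\dots,t_N\in\mathbf{C}$, $\xi\in\mathbf{C}^*$, $a_1,\dots,a_N\in\mathbf{C}^*$. The phase space is the symplectic manifold $M_{2N}=\Sigma_{t_1}\times\cdots\times\Sigma_{t_N}$ with coordinates $(e_j,f_j,k_j)$ at site $j$, functions at distinct sites Poisson commuting. Set $L_j(z)=\begin{pmatrix} zk_j-z^{-1}k_j^{-1} & e_j\\ f_j & zk_j^{-1}-z^{-1}k_j\end{pmatrix}$, $K(z)=\begin{pmatrix}\xi z-z^{-1}\xi^{-1}&0\\0&\xi z^{-1}-z\xi^{-1}\end{pmatrix}$, and $\mathcal{T}(z)=\frac{1}{z-z^{-1}}L_1(a_1z)\cdots L_N(a_Nz)\,K(z)\,L_N(z/a_N)\cdots L_1(z/a_1)$, $t(z)=\frac12\operatorname{tr}\mathcal{T}(z)$. With $w=z^2$, the reflection Hamiltonians $P_0,\dots,P_N$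 are the functions on $M_{2N}$ determined by $t(z)=\frac12\big(\frac{w+1}{w-1}\big)\big(\sum_{j=1}^N P_j\frac{w^j+w^{-j}}{2}+P_0\big)$. *)

theory Defs
  imports "HOL-Analysis.Analysis"
begin

text \<open>A point of the ambient Poisson variety (SL_2^*)^N is encoded by three coordinate
functions E, F, K :: nat => complex; the coordinates (e_j, f_j, k_j) of site j are
(E j, F j, K j), for 1 <= j <= N (values at other indices are irrelevant).\<close>

definition mat2 :: "complex \<Rightarrow> complex \<Rightarrow> complex \<Rightarrow> complex \<Rightarrow> complex^2^2" where
  "mat2 a b c d = (\<chi> i j. if i = 1 then (if j = 1 then a else b) else (if j = 1 then c else d))"

definition Lax :: "(nat \<Rightarrow> complex) \<Rightarrow> (nat \<Rightarrow> complex) \<Rightarrow> (nat \<Rightarrow> complex) \<Rightarrow> nat \<Rightarrow> complex \<Rightarrow> complex^2^2" where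
  "Lax E F K j z = mat2 (z * K j - inverse z * inverse (K j)) (E j) (F j) (z * inverse (K j) - inverse z * K j)"

definition Kmat :: "complex \<Rightarrow> complex \<Rightarrow> complex^2^2" where
  "Kmat \<xi> z = mat2 (\<xi> * z - inverse z * inverse \<xi>) 0 0 (\<xi> * inverse z - z * inverse \<xi>)"

definition monodromy ::
  "nat \<Rightarrow> (nat \<Rightarrow> complex) \<Rightarrow> complex \<Rightarrow> (nat \<Rightarrow> complex) \<Rightarrow> (nat \<Rightarrow> complex) \<Rightarrow> (nat \<Rightarrow> complex)
   \<Rightarrow> complex \<Rightarrow> complex^2^2" where
  "monodromy N a \<xi> E F K z =
     (let P = (foldr (\<lambda>j M. Lax E F K j (a j * z) ** M) [1..<N+1] (mat 1))
              ** Kmat \<xi> z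
              ** (foldr (\<lambda>j M. M ** Lax E F K j (z / a j)) [1..<N+1] (mat 1))
      in (\<chi> i l. (1 / (z - inverse z)) * P $ i $ l))"

definition tfun ::
  "nat \<Rightarrow> (nat \<Rightarrow> complex) \<Rightarrow> complex \<Rightarrow> (nat \<Rightarrow> complex) \<Rightarrow> (nat \<Rightarrow> complex) \<Rightarrow> (nat \<Rightarrow> complex)
   \<Rightarrow> complex \<Rightarrow> complex" where
  "tfun N a \<xi> E F K z = (monodromy N a \<xi> E F K z $ 1 $ 1 + monodromy N a \<xi> E F K z $ 2 $ 2) / 2"

definition casimir :: "(nat \<Rightarrow> complex) \<Rightarrow> (nat \<Rightarrow> complex) \<Rightarrow> (nat \<Rightarrow> complex) \<Rightarrow> nat \<Rightarrow> complex" where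
  "casimir E F K j = K j ^ 2 + inverse (K j) ^ 2 + E j * F j"

definition ambient :: "nat \<Rightarrow> (nat \<Rightarrow> complex) \<Rightarrow> bool" where
  "ambient N K = (\<forall>j\<in>{1..N}. K j \<noteq> 0)"

definition in_leaf :: "nat \<Rightarrow> (nat \<Rightarrow> complex) \<Rightarrow> (nat \<Rightarrow> complex) \<Rightarrow> (nat \<Rightarrow> complex) \<Rightarrow> (nat \<Rightarrow> complex) \<Rightarrow> bool" where
  "in_leaf N tt E F K = (ambient N K \<and> (\<forall>j\<in>{1..N}. casimir E F K j = tt j))"

definition dE where "dE H E F K j = deriv (\<lambda>h::complex. H (E(j := E j + h)) F K) 0"
definition dF where "dF H E F K j = deriv (\<lambda>h::complex. H E (F(j := F j + h)) K) 0"
definition dK where "dK H E F K j = deriv (\<lambda>h::complex. H E F (K(j := K j + h))) 0"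

text \<open>Hamiltonian vector field x' = {x, H} of H for the Poisson structure
  {k,e} = k e, {k,f} = -k f, {e,f} = 2(k^2 - k^-2), sites Poisson commuting.\<close>
definition hamE where
  "hamE H E F K j = - K j * E j * dK H E F K j + 2 * (K j ^ 2 - inverse (K j) ^ 2) * dF H E F K j"
definition hamF where
  "hamF H E F K j = K j * F j * dK H E F K j - 2 * (K j ^ 2 - inverse (K j) ^ 2) * dE H E F K j"
definition hamK where
  "hamK H E F K j = K j * E j * dE H E F K j - K j * F j * dF H E F K j"

definition ham_flow_curve where
  "ham_flow_curve N tt H gE gF gK lo hi =
     (\<forall>s\<in>{lo..hi}. in_leaf N tt (gE s) (gF s) (gK s) \<and>
        (\<forall>j\<in>{1..N}.
           ((\<lambda>r. gE r j) has_vector_derivative hamE H (gE s) (gF s) (gK s) j) (at s within {lo..hi}) \<and>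
           ((\<lambda>r. gF r j) has_vector_derivative hamF H (gE s) (gF s) (gK s) j) (at s within {lo..hi}) \<and>
           ((\<lambda>r. gK r j) has_vector_derivative hamK H (gE s) (gF s) (gK s) j) (at s within {lo..hi})))"

end

(*
  The monodromy matrix is (z - 1/z)^-1 U(z) with U(z) = L_1(a_1 z) ... L_N(a_N z) K(z) L_N(z/a_N) ... L_1(z/a_1),
  so the characteristic polynomial det(zeta - T(z)) is determined by tr U(z) and det U(z).

  The determinant is the product of the determinants of the Lax matrices and of K(z); det L_j(w) differs from
  w^2 + w^-2 by the Casimir of site j, so det U(z) is constant on the symplectic leaf.

  For the trace, the one-site Sklyanin brackets of the Lax matrices and the fact that K(z) solves the reflection
  equation give, by induction over the sites, the classical reflection equation
    {U(z) (x) U(u)} = [r(z/u), U(z) (x) U(u)] + (U(z) (x) 1) r(zu) (1 (x) U(u)) - (1 (x) U(u)) r(zu) (U(z) (x) 1),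
  whose right-hand side is traceless. Hence the functions tr U(z) are in involution. By Lagrange interpolation in
  w = z^2 every P_k is a finite linear combination of values t(z_i), so tr U(z) has zero derivative along the
  Hamiltonian flow of P_k.
*)

theory Submission
  imports Defs "HOL-Computational_Algebra.Polynomial"
begin

section \<open>Matrices and Kronecker products\<close>

lemma mat2_nth [simp]:
  "mat2 a b c d $ 1 $ 1 = a" "mat2 a b c d $ 1 $ 2 = b"
  "mat2 a b c d $ 2 $ 1 = c" "mat2 a b c d $ 2 $ 2 = d"
  by (simp_all add: mat2_def)

lemma trace_2: "trace (A :: 'a::semiring_1^2^2) = A $ 1 $ 1 + A $ 2 $ 2"
  by (simp add: trace_def sum_2)

lemma sum_UNIV_2_times_2:
  "sum f (UNIV :: (2 \<times> 2) set) = f (1,1) + f (1,2) + f (2,1) + f (2,2)"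
proof -
  have UNIV_eq: "(UNIV :: (2 \<times> 2) set) = {(1,1), (1,2), (2,1), (2,2)}"
    using exhaust_2 by (auto simp flip: UNIV_Times_UNIV)
  show ?thesis unfolding UNIV_eq by (simp add: add.assoc)
qed

definition smult_mat :: "'a::times \<Rightarrow> 'a^'n^'m \<Rightarrow> 'a^'n^'m" where
  "smult_mat c A = (\<chi> i j. c * A $ i $ j)"

lemma smult_mat_nth [simp]: "smult_mat c A $ i $ j = c * A $ i $ j"
  by (simp add: smult_mat_def)

lemma smult_mat_add: "smult_mat c (A + B) = smult_mat c A + smult_mat (c::'a::semiring) B"
  by (simp add: vec_eq_iff distrib_left)

lemma trace_smult_mat: "trace (smult_mat c A) = c * trace (A :: 'a::comm_semiring_1^'n^'n)"
  by (simp add: trace_def sum_distrib_left)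

lemma trace_sum: "trace (sum f S) = (\<Sum>x\<in>S. trace (f x :: 'a::comm_semiring_1^'n^'n))"
  by (induction S rule: infinite_finite_induct) (auto simp: trace_add trace_0 simp flip: mat_0)

lemma matrix_add_rdistrib: "(A + B) ** C = A ** C + B ** (C :: 'a::semiring_1^'p^'n)"
  by (simp add: vec_eq_iff matrix_matrix_mult_def sum.distrib distrib_right)

lemma matrix_diff_ldistrib: "A ** (B - C) = A ** B - A ** (C :: 'a::ring_1^'p^'n)"
  by (simp add: vec_eq_iff matrix_matrix_mult_def sum_subtractf right_diff_distrib)

lemma matrix_diff_rdistrib: "(A - B) ** C = A ** C - B ** (C :: 'a::ring_1^'p^'n)"
  by (simp add: vec_eq_iff matrix_matrix_mult_def sum_subtractf left_diff_distrib)

lemma matrix_sum_ldistrib: "A ** sum f S = (\<Sum>x\<in>S. A ** (f x :: 'a::semiring_1^'p^'n))"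
  by (induction S rule: infinite_finite_induct) (auto simp: matrix_add_ldistrib)

lemma matrix_sum_rdistrib: "sum f S ** A = (\<Sum>x\<in>S. f x ** (A :: 'a::semiring_1^'p^'n))"
  by (induction S rule: infinite_finite_induct) (auto simp: matrix_add_rdistrib)

lemma matrix_smult_left: "smult_mat c A ** B = smult_mat c (A ** (B :: 'a::comm_semiring_1^'p^'n))"
  by (simp add: vec_eq_iff matrix_matrix_mult_def sum_distrib_left mult.assoc)

lemma matrix_smult_right: "A ** smult_mat c B = smult_mat c (A ** (B :: 'a::comm_semiring_1^'p^'n))"
  by (simp add: vec_eq_iff matrix_matrix_mult_def sum_distrib_left mult_ac)

definition kron :: "'a::times^'n^'m \<Rightarrow> 'a^'q^'p \<Rightarrow> 'a^('n \<times> 'q)^('m \<times> 'p)" where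
  "kron A B = (\<chi> r c. A $ fst r $ fst c * B $ snd r $ snd c)"

lemma kron_nth [simp]: "kron A B $ (i, k) $ (j, l) = A $ i $ j * B $ k $ l"
  by (simp add: kron_def)

lemma kron_mult:
  fixes A :: "'a::comm_semiring_1^'n^'m" and B :: "'a^'q^'p"
  shows "kron A B ** kron C D = kron (A ** C) (B ** D)"
proof -
  have "(kron A B ** kron C D) $ (i, k) $ (j, l) = kron (A ** C) (B ** D) $ (i, k) $ (j, l)"
    for i j k l
  proof -
    have "(kron A B ** kron C D) $ (i, k) $ (j, l)
        = (\<Sum>(p, q)\<in>UNIV \<times> UNIV. A $ i $ p * C $ p $ j * (B $ k $ q * D $ q $ l))"
      by (simp add: matrix_matrix_mult_def kron_def case_prod_beta mult_ac flip: UNIV_Times_UNIV)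
    also have "\<dots> = (\<Sum>p\<in>UNIV. A $ i $ p * C $ p $ j) * (\<Sum>q\<in>UNIV. B $ k $ q * D $ q $ l)"
      by (simp add: sum.cartesian_product sum_product)
    finally show ?thesis by (simp add: matrix_matrix_mult_def)
  qed
  then show ?thesis by (simp add: vec_eq_iff)
qed

lemma kron_mult_assoc: "M ** kron A B ** kron C D = M ** kron (A ** C) (B ** (D :: 'a::comm_semiring_1^_^_))"
  by (simp add: kron_mult flip: matrix_mul_assoc)

lemma kron_one: "kron (mat 1) (mat 1) = (mat 1 :: 'a::semiring_1^('n::finite \<times> 'm::finite)^('n \<times> 'm))"
  by (simp add: vec_eq_iff mat_def)

lemma det_mat_minus_smult_mat:
  "det (mat \<zeta> - smult_mat c U) = \<zeta>^2 - \<zeta> * c * trace U + c^2 * det (U :: 'a::comm_ring_1^2^2)"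
  by (simp add: det_2 mat_def trace_2 algebra_simps power2_eq_square)

section \<open>The one-site bracket and the classical reflection equation\<close>

definition lax :: "complex \<Rightarrow> complex \<Rightarrow> complex \<Rightarrow> complex \<Rightarrow> complex^2^2" where
  "lax e f k w = mat2 (w * k - inverse w * inverse k) e f (w * inverse k - inverse w * k)"

lemma Lax_eq_lax: "Lax E F K j w = lax (E j) (F j) (K j) w"
  by (simp add: Lax_def lax_def)

datatype coord = Ce | Cf | Ck

definition lax_partial :: "coord \<Rightarrow> complex \<Rightarrow> complex \<Rightarrow> complex^2^2" where
  "lax_partial d k w = (case d of
      Ce \<Rightarrow> mat2 0 1 0 0
    | Cf \<Rightarrow> mat2 0 0 1 0
    | Ck \<Rightarrow> mat2 (w + inverse w * inverse k ^ 2) 0 0 (- (w * inverse k ^ 2) - inverse w))"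

definition site_bracket :: "complex \<Rightarrow> complex \<Rightarrow> complex \<Rightarrow> (coord \<Rightarrow> complex) \<Rightarrow> (coord \<Rightarrow> complex) \<Rightarrow> complex" where
  "site_bracket e f k g h =
     k * e * (g Ck * h Ce - g Ce * h Ck) - k * f * (g Ck * h Cf - g Cf * h Ck)
     + 2 * (k^2 - inverse k ^ 2) * (g Ce * h Cf - g Cf * h Ce)"

text \<open>The tensor bracket \<open>{A \<otimes> B}\<close> of two matrix-valued functions whose entrywise gradients
  at one site are \<open>g\<close> and \<open>h\<close>.\<close>
definition site_bracket_tensor ::
  "complex \<Rightarrow> complex \<Rightarrow> complex \<Rightarrow> (coord \<Rightarrow> complex^2^2) \<Rightarrow> (coord \<Rightarrow> complex^2^2) \<Rightarrow> complex^(2\<times>2)^(2\<times>2)"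
where
  "site_bracket_tensor e f k g h =
     smult_mat (k * e) (kron (g Ck) (h Ce) - kron (g Ce) (h Ck))
     - smult_mat (k * f) (kron (g Ck) (h Cf) - kron (g Cf) (h Ck))
     + smult_mat (2 * (k^2 - inverse k ^ 2)) (kron (g Ce) (h Cf) - kron (g Cf) (h Ce))"

definition r_matrix :: "complex \<Rightarrow> complex^(2\<times>2)^(2\<times>2)" where
  "r_matrix x = (\<chi> p q.
     if fst p = snd p \<and> fst q = snd q \<and> fst p = fst q then (x + inverse x) / (x - inverse x)
     else if fst p \<noteq> snd p \<and> fst q = snd p \<and> snd q = fst p then 2 / (x - inverse x)
     else 0)"

definition refl_bracket ::
  "complex^(2\<times>2)^(2\<times>2) \<Rightarrow> complex^(2\<times>2)^(2\<times>2) \<Rightarrow> complex^2^2 \<Rightarrow> complex^2^2 \<Rightarrow> complex^(2\<times>2)^(2\<times>2)"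
where
  "refl_bracket r s X Y =
     r ** kron X Y - kron X Y ** r
     + kron X (mat 1) ** s ** kron (mat 1) Y - kron (mat 1) Y ** s ** kron X (mat 1)"

lemma r_matrix_nth [simp]:
  "r_matrix x $ (1,1) $ (1,1) = (x + inverse x) / (x - inverse x)"
  "r_matrix x $ (2,2) $ (2,2) = (x + inverse x) / (x - inverse x)"
  "r_matrix x $ (1,2) $ (2,1) = 2 / (x - inverse x)"
  "r_matrix x $ (2,1) $ (1,2) = 2 / (x - inverse x)"
  "r_matrix x $ (1,1) $ (1,2) = 0" "r_matrix x $ (1,1) $ (2,1) = 0" "r_matrix x $ (1,1) $ (2,2) = 0"
  "r_matrix x $ (1,2) $ (1,1) = 0" "r_matrix x $ (1,2) $ (1,2) = 0" "r_matrix x $ (1,2) $ (2,2) = 0"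
  "r_matrix x $ (2,1) $ (1,1) = 0" "r_matrix x $ (2,1) $ (2,1) = 0" "r_matrix x $ (2,1) $ (2,2) = 0"
  "r_matrix x $ (2,2) $ (1,1) = 0" "r_matrix x $ (2,2) $ (1,2) = 0" "r_matrix x $ (2,2) $ (2,1) = 0"
  by (simp_all add: r_matrix_def)

lemma site_bracket_tensor_lax:
  assumes "k \<noteq> 0" "z \<noteq> 0" "u \<noteq> 0" "z/u - u/z \<noteq> 0"
  shows "site_bracket_tensor e f k (\<lambda>d. lax_partial d k z) (\<lambda>d. lax_partial d k u) =
    r_matrix (z/u) ** kron (lax e f k z) (lax e f k u) - kron (lax e f k z) (lax e f k u) ** r_matrix (z/u)"
proof -
  have "z * inverse z = 1" "u * inverse u = 1" "k * inverse k = 1"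
    "(z * inverse u - u * inverse z) * inverse (z * inverse u - u * inverse z) = 1"
    using assms by (auto simp flip: divide_inverse)
  then show ?thesis
    unfolding vec_eq_iff
    apply (simp add: forall_2 site_bracket_tensor_def lax_partial_def lax_def
        matrix_matrix_mult_def sum_UNIV_2_times_2)
    apply (simp only: divide_inverse)
    apply (intro conjI; algebra)
    done
qed

lemma site_bracket_tensor_lax_twisted:
  assumes "k \<noteq> 0" "z \<noteq> 0" "u \<noteq> 0" "z*u - inverse (z*u) \<noteq> 0"
  shows "site_bracket_tensor e f k (\<lambda>d. lax_partial d k z) (\<lambda>d. lax_partial d k u) =
    kron (lax e f k z) (mat 1) ** r_matrix (z*u) ** kron (mat 1) (lax e f k u)
    - kron (mat 1) (lax e f k u) ** r_matrix (z*u) ** kron (lax e f k z) (mat 1)"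
proof -
  have "z * inverse z = 1" "u * inverse u = 1" "k * inverse k = 1"
    "(z * u - inverse z * inverse u) * inverse (z * u - inverse z * inverse u) = 1"
    using assms by (auto simp: inverse_mult_distrib)
  then show ?thesis
    unfolding vec_eq_iff
    apply (simp add: forall_2 site_bracket_tensor_def lax_partial_def lax_def
        matrix_matrix_mult_def sum_UNIV_2_times_2 mat_def)
    apply (simp only: divide_inverse inverse_mult_distrib)
    apply (intro conjI; algebra)
    done
qed

lemma refl_bracket_Kmat:
  assumes "\<xi> \<noteq> 0" "z \<noteq> 0" "u \<noteq> 0" "z/u - u/z \<noteq> 0" "z*u - inverse (z*u) \<noteq> 0"
  shows "refl_bracket (r_matrix (z/u)) (r_matrix (z*u)) (Kmat \<xi> z) (Kmat \<xi> u) = 0"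
proof -
  have "z * inverse z = 1" "u * inverse u = 1" "\<xi> * inverse \<xi> = 1"
    "(z * u - inverse z * inverse u) * inverse (z * u - inverse z * inverse u) = 1"
    "(z * inverse u - u * inverse z) * inverse (z * inverse u - u * inverse z) = 1"
    using assms by (auto simp: inverse_mult_distrib simp flip: divide_inverse)
  then show ?thesis
    unfolding vec_eq_iff
    apply (simp add: refl_bracket_def forall_2 Kmat_def matrix_matrix_mult_def sum_UNIV_2_times_2 mat_def)
    apply (simp only: divide_inverse inverse_mult_distrib)
    apply (intro conjI; algebra)
    done
qed

lemma site_bracket_tensor_mult:
  "site_bracket_tensor e f k (\<lambda>d. A ** g d ** B) (\<lambda>d. C ** h d ** D) =
     kron A C ** site_bracket_tensor e f k g h ** kron B D"
  by (simp add: site_bracket_tensor_def matrix_add_ldistrib matrix_add_rdistrib matrix_diff_ldistrib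
      matrix_diff_rdistrib matrix_smult_left matrix_smult_right kron_mult matrix_mul_assoc)

lemma site_bracket_tensor_add_left:
  "site_bracket_tensor e f k (\<lambda>d. g1 d + g2 d) h = site_bracket_tensor e f k g1 h + site_bracket_tensor e f k g2 h"
  by (simp add: vec_eq_iff site_bracket_tensor_def kron_def algebra_simps)

lemma site_bracket_tensor_add_right:
  "site_bracket_tensor e f k g (\<lambda>d. h1 d + h2 d) = site_bracket_tensor e f k g h1 + site_bracket_tensor e f k g h2"
  by (simp add: vec_eq_iff site_bracket_tensor_def kron_def algebra_simps)

lemma refl_bracket_mult:
  fixes P Q P' Q' X Y :: "complex^2^2"
  shows "refl_bracket r s (P ** X ** Q) (P' ** Y ** Q') =
      (r ** kron P P' - kron P P' ** r) ** kron (X ** Q) (Y ** Q')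
    + kron (mat 1) (P' ** Y) ** (kron P (mat 1) ** s ** kron (mat 1) Q' - kron (mat 1) Q' ** s ** kron P (mat 1))
        ** kron (X ** Q) (mat 1)
    + kron (P ** X) (mat 1) ** (kron Q (mat 1) ** s ** kron (mat 1) P' - kron (mat 1) P' ** s ** kron Q (mat 1))
        ** kron (mat 1) (Y ** Q')
    + kron (P ** X) (P' ** Y) ** (r ** kron Q Q' - kron Q Q' ** r)
    + kron P P' ** refl_bracket r s X Y ** kron Q Q'"
  by (simp add: refl_bracket_def matrix_add_ldistrib matrix_add_rdistrib matrix_diff_ldistrib
      matrix_diff_rdistrib matrix_mul_assoc kron_mult kron_mult_assoc)

text \<open>Adding one site: by the Leibniz rule the new site contributes four brackets of pairs of Lax
  factors, which are the Sklyanin brackets and their twisted versions above.\<close>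
lemma refl_bracket_dress:
  fixes e f k \<alpha> z u :: complex and X Y :: "complex^2^2"
  assumes "k \<noteq> 0" "\<alpha> \<noteq> 0" "z \<noteq> 0" "u \<noteq> 0" "z/u - u/z \<noteq> 0" "z*u - inverse (z*u) \<noteq> 0"
  defines "P \<equiv> lax e f k (\<alpha> * z)" and "Q \<equiv> lax e f k (z / \<alpha>)"
    and "P' \<equiv> lax e f k (\<alpha> * u)" and "Q' \<equiv> lax e f k (u / \<alpha>)"
  shows "site_bracket_tensor e f k
           (\<lambda>d. lax_partial d k (\<alpha> * z) ** X ** Q + P ** X ** lax_partial d k (z / \<alpha>))
           (\<lambda>d. lax_partial d k (\<alpha> * u) ** Y ** Q' + P' ** Y ** lax_partial d k (u / \<alpha>))
         + kron P P' ** refl_bracket (r_matrix (z/u)) (r_matrix (z*u)) X Y ** kron Q Q'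
       = refl_bracket (r_matrix (z/u)) (r_matrix (z*u)) (P ** X ** Q) (P' ** Y ** Q')"
proof -
  let ?r = "r_matrix (z/u)" and ?s = "r_matrix (z*u)" and ?D = "\<lambda>w. \<lambda>d. lax_partial d k w"
  have nz: "\<alpha> * z \<noteq> 0" "\<alpha> * u \<noteq> 0" "z / \<alpha> \<noteq> 0" "u / \<alpha> \<noteq> 0"
    using assms(2-4) by auto
  have eq: "\<alpha> * z / (\<alpha> * u) = z / u" "z / \<alpha> / (u / \<alpha>) = z / u"
    "\<alpha> * z * (u / \<alpha>) = z * u" "z / \<alpha> * (\<alpha> * u) = z * u"
    using assms(2) by auto
  have nd: "\<alpha> * z / (\<alpha> * u) - \<alpha> * u / (\<alpha> * z) \<noteq> 0" "z / \<alpha> / (u / \<alpha>) - u / \<alpha> / (z / \<alpha>) \<noteq> 0"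
    "\<alpha> * z * (u / \<alpha>) - inverse (\<alpha> * z * (u / \<alpha>)) \<noteq> 0"
    "z / \<alpha> * (\<alpha> * u) - inverse (z / \<alpha> * (\<alpha> * u)) \<noteq> 0"
    using assms(2,5,6) by auto
  have "site_bracket_tensor e f k (?D (\<alpha> * z)) (?D (\<alpha> * u)) = ?r ** kron P P' - kron P P' ** ?r"
    using site_bracket_tensor_lax[OF assms(1) nz(1,2) nd(1)] unfolding eq P_def P'_def .
  moreover have "site_bracket_tensor e f k (?D (\<alpha> * z)) (?D (u / \<alpha>)) =
      kron P (mat 1) ** ?s ** kron (mat 1) Q' - kron (mat 1) Q' ** ?s ** kron P (mat 1)"
    using site_bracket_tensor_lax_twisted[OF assms(1) nz(1,4) nd(3)] unfolding eq P_def Q'_def .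
  moreover have "site_bracket_tensor e f k (?D (z / \<alpha>)) (?D (\<alpha> * u)) =
      kron Q (mat 1) ** ?s ** kron (mat 1) P' - kron (mat 1) P' ** ?s ** kron Q (mat 1)"
    using site_bracket_tensor_lax_twisted[OF assms(1) nz(3,2) nd(4)] unfolding eq Q_def P'_def .
  moreover have "site_bracket_tensor e f k (?D (z / \<alpha>)) (?D (u / \<alpha>)) = ?r ** kron Q Q' - kron Q Q' ** ?r"
    using site_bracket_tensor_lax[OF assms(1) nz(3,4) nd(2)] unfolding eq Q_def Q'_def .
  ultimately show ?thesis
    using site_bracket_tensor_mult[of e f k "mat 1" _ "X ** Q" "mat 1" _ "Y ** Q'"]
      site_bracket_tensor_mult[of e f k "mat 1" _ "X ** Q" "P' ** Y" _ "mat 1"]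
      site_bracket_tensor_mult[of e f k "P ** X" _ "mat 1" "mat 1" _ "Y ** Q'"]
      site_bracket_tensor_mult[of e f k "P ** X" _ "mat 1" "P' ** Y" _ "mat 1"]
    by (simp add: site_bracket_tensor_add_left site_bracket_tensor_add_right refl_bracket_mult
        kron_one matrix_mul_assoc add_ac)
qed

lemma trace_kron: "trace (kron A B) = trace A * trace (B :: 'a::comm_semiring_1^'m^'m)"
  by (simp add: trace_def kron_def case_prod_beta sum_product sum.cartesian_product
      flip: UNIV_Times_UNIV)

lemma trace_site_bracket_tensor:
  "trace (site_bracket_tensor e f k g h) = site_bracket e f k (\<lambda>d. trace (g d)) (\<lambda>d. trace (h d))"
  by (simp add: site_bracket_tensor_def site_bracket_def trace_add trace_sub trace_smult_mat trace_kron)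

lemma site_bracket_sum_right:
  "site_bracket e f k g (\<lambda>d. \<Sum>i\<in>I. c i * h i d) = (\<Sum>i\<in>I. c i * site_bracket e f k g (h i))"
  by (induction I rule: infinite_finite_induct) (simp_all add: site_bracket_def algebra_simps)

lemma trace_refl_bracket: "trace (refl_bracket r s X Y) = 0"
proof -
  \<comment> \<open>cyclicity of the trace; the two \<open>s\<close>-terms agree because \<open>X \<otimes> 1\<close> and \<open>1 \<otimes> Y\<close> commute\<close>
  have comm: "kron X (mat 1) ** kron (mat 1) Y = kron (mat 1) Y ** kron X (mat 1)"
    by (simp add: kron_mult)
  have "trace (kron X (mat 1) ** s ** kron (mat 1) Y) = trace (kron (mat 1) Y ** kron X (mat 1) ** s)"
    by (metis trace_mul_sym matrix_mul_assoc)
  also have "\<dots> = trace (kron (mat 1) Y ** s ** kron X (mat 1))"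
    by (metis trace_mul_sym comm matrix_mul_assoc)
  finally show ?thesis
    by (simp add: refl_bracket_def trace_add trace_sub trace_mul_sym[of r])
qed

lemma det_lax:
  "k \<noteq> 0 \<Longrightarrow> w \<noteq> 0 \<Longrightarrow> det (lax e f k w) = w^2 + inverse w ^ 2 - (k^2 + inverse k ^ 2 + e * f)"
  by (simp add: det_2 lax_def field_simps power2_eq_square)

section \<open>Matrix-valued derivatives\<close>

text \<open>\<open>\<phi>\<close> is \<open>of_real\<close> for derivatives in time and the identity for complex partial derivatives.\<close>
definition has_matrix_derivative ::
  "('v::real_normed_vector \<Rightarrow> complex) \<Rightarrow> ('v \<Rightarrow> complex^'n^'m) \<Rightarrow> complex^'n^'m \<Rightarrow> 'v \<Rightarrow> 'v set \<Rightarrow> bool"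
where
  "has_matrix_derivative \<phi> M D x S \<longleftrightarrow>
     (\<forall>p q. ((\<lambda>t. M t $ p $ q) has_derivative (\<lambda>h. \<phi> h * D $ p $ q)) (at x within S))"

lemma has_matrix_derivative_const: "has_matrix_derivative \<phi> (\<lambda>t. C) 0 x S"
  by (simp add: has_matrix_derivative_def)

lemma has_matrix_derivative_mult:
  assumes "has_matrix_derivative \<phi> A DA x S" "has_matrix_derivative \<phi> B DB x S"
  shows "has_matrix_derivative \<phi> (\<lambda>t. A t ** B t) (DA ** B x + A x ** DB) x S"
  unfolding has_matrix_derivative_def
proof (intro allI)
  fix p q
  have "((\<lambda>t. \<Sum>k\<in>UNIV. A t $ p $ k * B t $ k $ q) has_derivative
     (\<lambda>h. \<Sum>k\<in>UNIV. A x $ p $ k * (\<phi> h * DB $ k $ q) + \<phi> h * DA $ p $ k * B x $ k $ q)) (at x within S)"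
    using assms unfolding has_matrix_derivative_def by (intro has_derivative_sum has_derivative_mult) auto
  then show "((\<lambda>t. (A t ** B t) $ p $ q) has_derivative (\<lambda>h. \<phi> h * (DA ** B x + A x ** DB) $ p $ q))
      (at x within S)"
    by (simp add: matrix_matrix_mult_def sum_distrib_left sum.distrib algebra_simps)
qed

lemma has_derivative_trace:
  assumes "has_matrix_derivative \<phi> M D x S"
  shows "((\<lambda>t. trace (M t)) has_derivative (\<lambda>h. \<phi> h * trace D)) (at x within S)"
  unfolding trace_def sum_distrib_left
  using assms unfolding has_matrix_derivative_def by (intro has_derivative_sum) auto

lemma has_matrix_derivative_lax:
  assumes "(e has_derivative (\<lambda>h. \<phi> h * De)) (at x within S)"
    and "(f has_derivative (\<lambda>h. \<phi> h * Df)) (at x within S)"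
    and k: "(k has_derivative (\<lambda>h. \<phi> h * Dk)) (at x within S)"
    and "k x \<noteq> 0"
  shows "has_matrix_derivative \<phi> (\<lambda>t. lax (e t) (f t) (k t) w)
     (smult_mat De (lax_partial Ce (k x) w) + smult_mat Df (lax_partial Cf (k x) w)
      + smult_mat Dk (lax_partial Ck (k x) w)) x S"
proof -
  have k_inv: "((\<lambda>t. inverse (k t)) has_derivative (\<lambda>h. - (inverse (k x) * (\<phi> h * Dk) * inverse (k x))))
      (at x within S)"
    by (rule Deriv.has_derivative_inverse[OF assms(4) k])
  have "((\<lambda>t. w * k t - inverse w * inverse (k t)) has_derivative
      (\<lambda>h. \<phi> h * (Dk * (w + inverse w * inverse (k x) ^ 2)))) (at x within S)"
    by (rule has_derivative_eq_rhs[OF has_derivative_diff[OF has_derivative_mult_right[OF k]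
          has_derivative_mult_right[OF k_inv]]]) (simp add: fun_eq_iff power2_eq_square algebra_simps)
  moreover have "((\<lambda>t. w * inverse (k t) - inverse w * k t) has_derivative
      (\<lambda>h. \<phi> h * (Dk * (- (w * inverse (k x) ^ 2) - inverse w)))) (at x within S)"
    by (rule has_derivative_eq_rhs[OF has_derivative_diff[OF has_derivative_mult_right[OF k_inv]
          has_derivative_mult_right[OF k]]]) (simp add: fun_eq_iff power2_eq_square algebra_simps)
  ultimately show ?thesis
    using assms(1,2) by (simp add: has_matrix_derivative_def forall_2 lax_def lax_partial_def)
qed

section \<open>Interpolation\<close>

lemma lagrange_basis_exists:
  fixes ws :: "nat \<Rightarrow> 'a::field"
  assumes inj: "inj_on ws {..n}"
  obtains L where "\<And>i. i \<le> n \<Longrightarrow> degree (L i) \<le> n"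
    and "\<And>i m. i \<le> n \<Longrightarrow> m \<le> n \<Longrightarrow> poly (L i) (ws m) = (if m = i then 1 else 0)"
proof
  define L where "L i = smult (inverse (\<Prod>l\<in>{..n}-{i}. ws i - ws l)) (\<Prod>l\<in>{..n}-{i}. [:- ws l, 1:])" for i
  show "degree (L i) \<le> n" if "i \<le> n" for i
  proof -
    have "degree (L i) \<le> degree (\<Prod>l\<in>{..n}-{i}. [:- ws l, 1:])"
      unfolding L_def by (rule degree_smult_le)
    also have "\<dots> \<le> sum (degree \<circ> (\<lambda>l. [:- ws l, 1:])) ({..n}-{i})"
      by (rule degree_prod_sum_le) simp
    finally show ?thesis using that by simp
  qed
  show "poly (L i) (ws m) = (if m = i then 1 else 0)" if "i \<le> n" "m \<le> n" for i m
  proof (cases "m = i")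
    case True
    have "(\<Prod>l\<in>{..n}-{i}. ws i - ws l) \<noteq> 0"
      using inj that by (auto simp: inj_on_def)
    then show ?thesis using True by (simp add: L_def poly_prod)
  next
    case False
    then have "(\<Prod>l\<in>{..n}-{i}. poly [:- ws l, 1:] (ws m)) = 0"
      using that by (intro prod_zero) auto
    then show ?thesis using False by (simp add: L_def poly_prod)
  qed
qed

lemma lagrange_coeff_weights:
  fixes ws :: "nat \<Rightarrow> 'a::field"
  assumes inj: "inj_on ws {..n}"
  obtains wt where "\<And>q m. degree q \<le> n \<Longrightarrow> coeff q m = (\<Sum>i\<le>n. poly q (ws i) * wt i m)"
proof -
  obtain L where deg: "\<And>i. i \<le> n \<Longrightarrow> degree (L i) \<le> n"
    and poly_L: "\<And>i m. i \<le> n \<Longrightarrow> m \<le> n \<Longrightarrow> poly (L i) (ws m) = (if m = i then 1 else 0)"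
    using lagrange_basis_exists[OF inj] by blast
  show ?thesis
  proof
    fix q :: "'a poly" and m assume "degree q \<le> n"
    define q' where "q' = (\<Sum>i\<le>n. smult (poly q (ws i)) (L i))"
    have "q = q'"
    proof (rule poly_eqI_degree[where A = "ws ` {..n}"])
      fix x assume "x \<in> ws ` {..n}"
      then obtain m where m: "m \<le> n" "x = ws m" by auto
      have "poly q' x = (\<Sum>i\<le>n. poly q (ws i) * (if m = i then 1 else 0))"
        unfolding q'_def using m poly_L by (simp add: poly_sum)
      also have "\<dots> = poly q x" using m by (simp add: if_distrib sum.delta cong: if_cong)
      finally show "poly q x = poly q' x" by simp
    next
      have "degree q' \<le> n"
        unfolding q'_def by (intro degree_sum_le) (auto intro: order_trans[OF degree_smult_le] deg)
      moreover have "card (ws ` {..n}) = n + 1" using inj by (simp add: card_image)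
      ultimately show "degree q < card (ws ` {..n})" "degree q' < card (ws ` {..n})"
        using \<open>degree q \<le> n\<close> by auto
    qed
    then have "coeff q m = coeff q' m" by simp
    then show "coeff q m = (\<Sum>i\<le>n. poly q (ws i) * coeff (L i) m)"
      by (simp add: q'_def coeff_sum)
  qed
qed

definition laurent_sym_poly :: "nat \<Rightarrow> (nat \<Rightarrow> complex) \<Rightarrow> complex poly" where
  "laurent_sym_poly N c = monom (c 0) N + (\<Sum>j\<in>{1..N}. monom (c j / 2) (N + j) + monom (c j / 2) (N - j))"

lemma degree_laurent_sym_poly: "degree (laurent_sym_poly N c) \<le> 2 * N"
  unfolding laurent_sym_poly_def
  by (intro degree_add_le degree_sum_le order_trans[OF degree_monom_le]) auto

lemma coeff_laurent_sym_poly: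
  assumes "k \<le> N"
  shows "coeff (laurent_sym_poly N c) (N + k) = (if k = 0 then c 0 else c k / 2)"
proof -
  have "coeff (monom (c j / 2) (N + j) + monom (c j / 2) (N - j)) (N + k) = (if j = k then c k / 2 else 0)"
    if "j \<in> {1..N}" for j
    using that by auto
  then show ?thesis
    using assms by (simp add: laurent_sym_poly_def coeff_sum)
qed

lemma poly_laurent_sym_poly:
  assumes "w \<noteq> 0"
  shows "poly (laurent_sym_poly N c) w = w ^ N * ((\<Sum>j=1..N. c j * (w ^ j + inverse w ^ j) / 2) + c 0)"
proof -
  have site: "poly (monom (c j / 2) (N + j) + monom (c j / 2) (N - j)) w
      = w ^ N * (c j * (w ^ j + inverse w ^ j) / 2)" if "j \<in> {1..N}" for j
    using assms that by (auto simp: poly_monom power_add power_diff field_simps)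
  have "poly (laurent_sym_poly N c) w
      = c 0 * w ^ N + (\<Sum>j=1..N. poly (monom (c j / 2) (N + j) + monom (c j / 2) (N - j)) w)"
    by (simp only: laurent_sym_poly_def poly_add poly_sum poly_monom)
  also have "\<dots> = c 0 * w ^ N + (\<Sum>j=1..N. w ^ N * (c j * (w ^ j + inverse w ^ j) / 2))"
    by (rule arg_cong[where f = "(+) _"], rule sum.cong[OF refl site])
  also have "\<dots> = w ^ N * ((\<Sum>j=1..N. c j * (w ^ j + inverse w ^ j) / 2) + c 0)"
    by (simp only: sum_distrib_left distrib_left mult.commute add.commute)
  finally show ?thesis .
qed

lemma inj_on_avoiding_finite:
  assumes "infinite (UNIV :: 'a set)" "finite A"
  obtains f :: "nat \<Rightarrow> 'a" where "inj_on f {..n}" "f ` {..n} \<inter> A = {}"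
proof -
  have "infinite (UNIV - A)" using assms by (simp add: Diff_infinite_finite)
  then obtain B where B: "finite B" "card B = Suc n" "B \<subseteq> UNIV - A"
    using infinite_arbitrarily_large by blast
  obtain f where "bij_betw f {0..<card B} B"
    using ex_bij_betw_nat_finite[OF B(1)] by blast
  then show ?thesis
    using that B(2,3) by (auto simp: bij_betw_def atLeast0LessThan lessThan_Suc_atMost)
qed

text \<open>Nodes avoiding \<open>z\<^sup>2\<close> and \<open>z\<^sup>-\<^sup>2\<close> keep the r-matrices \<open>r(z/z\<^sub>i)\<close> and \<open>r(z z\<^sub>i)\<close> finite.\<close>
lemma interpolation_nodes_exist:
  fixes z :: complex and n :: nat
  assumes "z \<noteq> 0"
  obtains zs where "inj_on (\<lambda>i. zs i ^ 2) {..n}"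
    and "\<forall>i\<le>n. zs i \<noteq> 0 \<and> zs i ^ 2 \<noteq> 1 \<and> zs i ^ 2 \<noteq> -1
                 \<and> z / zs i - zs i / z \<noteq> 0 \<and> z * zs i - inverse (z * zs i) \<noteq> 0"
proof -
  have "finite {0, 1, -1, z^2, inverse (z^2)}" by simp
  then obtain ws :: "nat \<Rightarrow> complex" where inj: "inj_on ws {..n}"
    and avoid: "ws ` {..n} \<inter> {0, 1, -1, z^2, inverse (z^2)} = {}"
    using inj_on_avoiding_finite[OF infinite_UNIV_char_0] by blast
  define zs where "zs i = csqrt (ws i)" for i
  have sq: "zs i ^ 2 = ws i" for i by (simp add: zs_def)
  have nodes: "zs i \<noteq> 0 \<and> zs i ^ 2 \<noteq> 1 \<and> zs i ^ 2 \<noteq> -1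
      \<and> z / zs i - zs i / z \<noteq> 0 \<and> z * zs i - inverse (z * zs i) \<noteq> 0" if "i \<le> n" for i
  proof -
    have "ws i \<notin> {0, 1, -1, z^2, inverse (z^2)}"
      using avoid that by blast
    then have ws: "ws i \<noteq> 0" "ws i \<noteq> 1" "ws i \<noteq> -1" "ws i \<noteq> z^2" "ws i \<noteq> inverse (z^2)"
      by simp_all
    then have zs: "zs i \<noteq> 0" using sq[of i] by auto
    have "z / zs i \<noteq> zs i / z"
    proof
      assume "z / zs i = zs i / z"
      then have "z * z = zs i * zs i" using zs assms by (simp add: frac_eq_eq)
      then show False using ws(4) sq[of i] by (simp add: power2_eq_square)
    qed
    moreover have "z * zs i \<noteq> inverse (z * zs i)"
    proof
      assume "z * zs i = inverse (z * zs i)"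
      then have "z^2 * ws i = 1" using zs assms by (simp add: sq[symmetric] power2_eq_square field_simps)
      then show False using ws(5) inverse_unique by metis
    qed
    ultimately show ?thesis using zs ws(2,3) by (simp add: sq)
  qed
  show ?thesis
  proof (rule that)
    show "inj_on (\<lambda>i. zs i ^ 2) {..n}" using inj by (simp add: sq)
  qed (use nodes in blast)
qed

section \<open>The reflection monodromy\<close>

context
  fixes a :: "nat \<Rightarrow> complex" and \<xi> :: complex
begin

text \<open>For \<open>js = [1..<N+1]\<close> this is \<open>U(z)\<close>, the monodromy matrix without the factor \<open>1/(z - z\<^sup>-\<^sup>1)\<close>.\<close>
fun refl_prod :: "(nat \<Rightarrow> complex) \<Rightarrow> (nat \<Rightarrow> complex) \<Rightarrow> (nat \<Rightarrow> complex) \<Rightarrow> nat list \<Rightarrow> complex \<Rightarrow> complex^2^2"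
where
  "refl_prod E F K [] z = Kmat \<xi> z"
| "refl_prod E F K (i # js) z =
     lax (E i) (F i) (K i) (a i * z) ** refl_prod E F K js z ** lax (E i) (F i) (K i) (z / a i)"

text \<open>The partial derivative of \<open>refl_prod\<close> in coordinate \<open>d\<close> of site \<open>j\<close> (for distinct \<open>js\<close>).\<close>
fun refl_prod_grad ::
  "(nat \<Rightarrow> complex) \<Rightarrow> (nat \<Rightarrow> complex) \<Rightarrow> (nat \<Rightarrow> complex) \<Rightarrow> nat list \<Rightarrow> complex \<Rightarrow> nat \<Rightarrow> coord \<Rightarrow> complex^2^2"
where
  "refl_prod_grad E F K [] z j d = 0"
| "refl_prod_grad E F K (i # js) z j d =
     (if j = i then
        lax_partial d (K i) (a i * z) ** refl_prod E F K js z ** lax (E i) (F i) (K i) (z / a i)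
        + lax (E i) (F i) (K i) (a i * z) ** refl_prod E F K js z ** lax_partial d (K i) (z / a i)
      else 0)
     + lax (E i) (F i) (K i) (a i * z) ** refl_prod_grad E F K js z j d ** lax (E i) (F i) (K i) (z / a i)"

lemma refl_prod_grad_notin: "j \<notin> set js \<Longrightarrow> refl_prod_grad E F K js z j d = 0"
  by (induction js) auto

definition refl_prod_bracket ::
  "(nat \<Rightarrow> complex) \<Rightarrow> (nat \<Rightarrow> complex) \<Rightarrow> (nat \<Rightarrow> complex) \<Rightarrow> nat list \<Rightarrow> complex \<Rightarrow> complex
   \<Rightarrow> complex^(2\<times>2)^(2\<times>2)"
where
  "refl_prod_bracket E F K js z u =
     (\<Sum>j\<in>set js. site_bracket_tensor (E j) (F j) (K j) (refl_prod_grad E F K js z j) (refl_prod_grad E F K js u j))"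

lemma refl_prod_bracket_eq:
  assumes "distinct js" "\<forall>j\<in>set js. K j \<noteq> 0 \<and> a j \<noteq> 0" "\<xi> \<noteq> 0" "z \<noteq> 0" "u \<noteq> 0"
    "z/u - u/z \<noteq> 0" "z*u - inverse (z*u) \<noteq> 0"
  shows "refl_prod_bracket E F K js z u =
    refl_bracket (r_matrix (z/u)) (r_matrix (z*u)) (refl_prod E F K js z) (refl_prod E F K js u)"
  using assms(1,2)
proof (induction js)
  case Nil
  then show ?case using refl_bracket_Kmat[OF assms(3-7)] by (simp add: refl_prod_bracket_def)
next
  case (Cons i js)
  let ?L = "lax (E i) (F i) (K i)"
  have i: "i \<notin> set js" "K i \<noteq> 0" "a i \<noteq> 0" using Cons.prems by auto
  have grad_i: "refl_prod_grad E F K (i # js) w i = (\<lambda>d.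
      lax_partial d (K i) (a i * w) ** refl_prod E F K js w ** ?L (w / a i)
      + ?L (a i * w) ** refl_prod E F K js w ** lax_partial d (K i) (w / a i))" for w
    using refl_prod_grad_notin[OF i(1)] by (simp add: fun_eq_iff)
  have grad_j: "refl_prod_grad E F K (i # js) w j =
      (\<lambda>d. ?L (a i * w) ** refl_prod_grad E F K js w j d ** ?L (w / a i))" if "j \<in> set js" for j w
    using i(1) that by (auto simp: fun_eq_iff)
  have "refl_prod_bracket E F K (i # js) z u =
      site_bracket_tensor (E i) (F i) (K i) (refl_prod_grad E F K (i # js) z i) (refl_prod_grad E F K (i # js) u i)
      + kron (?L (a i * z)) (?L (a i * u)) ** refl_prod_bracket E F K js z u ** kron (?L (z / a i)) (?L (u / a i))"
    using i(1) by (simp add: refl_prod_bracket_def grad_j site_bracket_tensor_mult matrix_sum_ldistrib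
        matrix_sum_rdistrib cong: sum.cong)
  then show ?case
    using refl_bracket_dress[OF i(2,3) assms(4-7)] Cons.IH Cons.prems by (simp add: grad_i)
qed

lemma trace_refl_prod_grad_involution:
  assumes "distinct js" "\<forall>j\<in>set js. K j \<noteq> 0 \<and> a j \<noteq> 0" "\<xi> \<noteq> 0" "z \<noteq> 0" "u \<noteq> 0"
    "z/u - u/z \<noteq> 0" "z*u - inverse (z*u) \<noteq> 0"
  shows "(\<Sum>j\<in>set js. site_bracket (E j) (F j) (K j)
     (\<lambda>d. trace (refl_prod_grad E F K js z j d)) (\<lambda>d. trace (refl_prod_grad E F K js u j d))) = 0"
proof -
  have "(\<Sum>j\<in>set js. site_bracket (E j) (F j) (K j)
     (\<lambda>d. trace (refl_prod_grad E F K js z j d)) (\<lambda>d. trace (refl_prod_grad E F K js u j d)))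
      = trace (refl_prod_bracket E F K js z u)"
    by (simp add: refl_prod_bracket_def trace_sum trace_site_bracket_tensor)
  also have "\<dots> = 0"
    using refl_prod_bracket_eq[OF assms, of E F] by (simp add: trace_refl_bracket)
  finally show ?thesis .
qed

definition refl_prod_deriv ::
  "(nat \<Rightarrow> complex) \<Rightarrow> (nat \<Rightarrow> complex) \<Rightarrow> (nat \<Rightarrow> complex) \<Rightarrow> nat list \<Rightarrow> complex
   \<Rightarrow> (nat \<Rightarrow> complex) \<Rightarrow> (nat \<Rightarrow> complex) \<Rightarrow> (nat \<Rightarrow> complex) \<Rightarrow> complex^2^2"
where
  "refl_prod_deriv E F K js z De Df Dk =
     (\<Sum>j\<in>set js. smult_mat (De j) (refl_prod_grad E F K js z j Ce)
       + smult_mat (Df j) (refl_prod_grad E F K js z j Cf) + smult_mat (Dk j) (refl_prod_grad E F K js z j Ck))"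

lemma trace_refl_prod_deriv:
  "trace (refl_prod_deriv E F K js z De Df Dk) = (\<Sum>j\<in>set js. De j * trace (refl_prod_grad E F K js z j Ce)
     + Df j * trace (refl_prod_grad E F K js z j Cf) + Dk j * trace (refl_prod_grad E F K js z j Ck))"
  by (simp add: refl_prod_deriv_def trace_sum trace_add trace_smult_mat)

lemma refl_prod_deriv_Cons:
  fixes E F K De Df Dk :: "nat \<Rightarrow> complex" and z :: complex
  assumes "i \<notin> set js"
  defines "P \<equiv> lax (E i) (F i) (K i) (a i * z)" and "Q \<equiv> lax (E i) (F i) (K i) (z / a i)"
    and "dL \<equiv> \<lambda>w. smult_mat (De i) (lax_partial Ce (K i) w) + smult_mat (Df i) (lax_partial Cf (K i) w)
              + smult_mat (Dk i) (lax_partial Ck (K i) w)"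
  shows "refl_prod_deriv E F K (i # js) z De Df Dk =
    (dL (a i * z) ** refl_prod E F K js z + P ** refl_prod_deriv E F K js z De Df Dk) ** Q
    + P ** refl_prod E F K js z ** dL (z / a i)"
proof -
  have grad_j: "refl_prod_grad E F K (i # js) z j d = P ** refl_prod_grad E F K js z j d ** Q"
    if "j \<in> set js" for j d
    using assms(1) that by (auto simp: P_def Q_def)
  have grad_i: "refl_prod_grad E F K (i # js) z i d = lax_partial d (K i) (a i * z) ** refl_prod E F K js z ** Q
      + P ** refl_prod E F K js z ** lax_partial d (K i) (z / a i)" for d
    using refl_prod_grad_notin[OF assms(1)] by (simp add: P_def Q_def)
  have "refl_prod_deriv E F K (i # js) z De Df Dk =
      (smult_mat (De i) (refl_prod_grad E F K (i # js) z i Ce) + smult_mat (Df i) (refl_prod_grad E F K (i # js) z i Cf)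
       + smult_mat (Dk i) (refl_prod_grad E F K (i # js) z i Ck))
      + (\<Sum>j\<in>set js. smult_mat (De j) (P ** refl_prod_grad E F K js z j Ce ** Q)
         + smult_mat (Df j) (P ** refl_prod_grad E F K js z j Cf ** Q)
         + smult_mat (Dk j) (P ** refl_prod_grad E F K js z j Ck ** Q))"
    using assms(1) by (simp add: refl_prod_deriv_def grad_j del: refl_prod_grad.simps cong: sum.cong)
  also have "\<dots> = (dL (a i * z) ** refl_prod E F K js z + P ** refl_prod_deriv E F K js z De Df Dk) ** Q
    + P ** refl_prod E F K js z ** dL (z / a i)"
    by (simp only: grad_i refl_prod_deriv_def dL_def matrix_add_ldistrib matrix_add_rdistrib
        matrix_smult_left matrix_smult_right smult_mat_add matrix_sum_ldistrib matrix_sum_rdistrib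
        sum.distrib matrix_mul_assoc) (simp add: add_ac)
  finally show ?thesis .
qed

lemma has_matrix_derivative_refl_prod:
  assumes "distinct js"
    and "\<forall>j\<in>set js. ((\<lambda>t. E t j) has_derivative (\<lambda>h. \<phi> h * De j)) (at x within S)
       \<and> ((\<lambda>t. F t j) has_derivative (\<lambda>h. \<phi> h * Df j)) (at x within S)
       \<and> ((\<lambda>t. K t j) has_derivative (\<lambda>h. \<phi> h * Dk j)) (at x within S) \<and> K x j \<noteq> 0"
  shows "has_matrix_derivative \<phi> (\<lambda>t. refl_prod (E t) (F t) (K t) js z)
           (refl_prod_deriv (E x) (F x) (K x) js z De Df Dk) x S"
  using assms
proof (induction js)
  case Nil
  then show ?case by (simp add: refl_prod_deriv_def has_matrix_derivative_const)
next
  case (Cons i js)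
  have "i \<in> set (i # js)" by simp
  then have lax_i: "has_matrix_derivative \<phi> (\<lambda>t. lax (E t i) (F t i) (K t i) w)
     (smult_mat (De i) (lax_partial Ce (K x i) w) + smult_mat (Df i) (lax_partial Cf (K x i) w)
      + smult_mat (Dk i) (lax_partial Ck (K x i) w)) x S" for w
    using Cons.prems(2) by (intro has_matrix_derivative_lax) auto
  have "has_matrix_derivative \<phi> (\<lambda>t. refl_prod (E t) (F t) (K t) js z)
      (refl_prod_deriv (E x) (F x) (K x) js z De Df Dk) x S"
    using Cons by simp
  from has_matrix_derivative_mult[OF has_matrix_derivative_mult[OF lax_i this] lax_i] Cons.prems(1)
  show ?case by (simp add: refl_prod_deriv_Cons)
qed

definition shift_coord :: "coord \<Rightarrow> coord \<Rightarrow> nat \<Rightarrow> complex \<Rightarrow> (nat \<Rightarrow> complex) \<Rightarrow> nat \<Rightarrow> complex" where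
  "shift_coord c d j h X = (if c = d then X(j := X j + h) else X)"

lemma has_field_derivative_trace_refl_prod:
  assumes "distinct js" "\<forall>m\<in>set js. K m \<noteq> 0" "j \<in> set js"
  shows "((\<lambda>h. trace (refl_prod (shift_coord Ce d j h E) (shift_coord Cf d j h F) (shift_coord Ck d j h K) js z))
           has_field_derivative trace (refl_prod_grad E F K js z j d)) (at 0)"
proof -
  define \<delta> where "\<delta> c m = (if c = d \<and> m = j then 1 else 0 :: complex)" for c m
  have shift: "((\<lambda>h. shift_coord c d j h X m) has_derivative (\<lambda>h. h * \<delta> c m)) (at 0)" for c X m
  proof (cases "c = d \<and> m = j")
    case True
    then show ?thesis by (auto simp: shift_coord_def \<delta>_def intro!: derivative_eq_intros)
  next
    case False
    then have "(\<lambda>h. shift_coord c d j h X m) = (\<lambda>h. X m)" by (auto simp: shift_coord_def)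
    moreover have "\<delta> c m = 0" using False by (simp add: \<delta>_def)
    ultimately show ?thesis by simp
  qed
  have delta: "(\<Sum>m\<in>set js. (if m = j then 1 else 0) * t m) = t j" for t :: "nat \<Rightarrow> complex"
  proof -
    have "(\<Sum>m\<in>set js. (if m = j then 1 else 0) * t m) = (\<Sum>m\<in>set js. if m = j then t m else 0)"
      by (rule sum.cong) auto
    then show ?thesis using assms(3) by simp
  qed
  have shift_0: "shift_coord c d j 0 X = X" for c X
    by (simp add: shift_coord_def)
  have "has_matrix_derivative (\<lambda>h. h)
      (\<lambda>h. refl_prod (shift_coord Ce d j h E) (shift_coord Cf d j h F) (shift_coord Ck d j h K) js z)
      (refl_prod_deriv (shift_coord Ce d j 0 E) (shift_coord Cf d j 0 F) (shift_coord Ck d j 0 K) js z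
        (\<delta> Ce) (\<delta> Cf) (\<delta> Ck)) 0 UNIV"
    using shift assms(2) by (intro has_matrix_derivative_refl_prod assms(1)) (simp add: shift_0)
  then have "has_matrix_derivative (\<lambda>h. h)
      (\<lambda>h. refl_prod (shift_coord Ce d j h E) (shift_coord Cf d j h F) (shift_coord Ck d j h K) js z)
      (refl_prod_deriv E F K js z (\<delta> Ce) (\<delta> Cf) (\<delta> Ck)) 0 UNIV"
    by (simp only: shift_0)
  note has_derivative_trace[OF this]
  moreover have "trace (refl_prod_deriv E F K js z (\<delta> Ce) (\<delta> Cf) (\<delta> Ck)) = trace (refl_prod_grad E F K js z j d)"
    using assms(3) by (cases d) (simp_all add: trace_refl_prod_deriv \<delta>_def delta)
  ultimately show ?thesis
    by (simp add: has_field_derivative_def mult_commute_abs)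
qed

lemma has_field_derivative_trace_combination:
  assumes H: "\<forall>E F K. (\<forall>m\<in>set js. K m \<noteq> 0) \<longrightarrow> H E F K = (\<Sum>i\<in>I. c i * trace (refl_prod E F K js (zs i)))"
    and "distinct js" "\<forall>m\<in>set js. K m \<noteq> 0" "j \<in> set js"
  shows "((\<lambda>h. H (shift_coord Ce d j h E) (shift_coord Cf d j h F) (shift_coord Ck d j h K))
           has_field_derivative (\<Sum>i\<in>I. c i * trace (refl_prod_grad E F K js (zs i) j d))) (at 0)"
proof -
  have "K j \<noteq> 0" using assms(3,4) by blast
  then have "\<forall>\<^sub>F h in nhds 0. h \<in> ball 0 (norm (K j))"
    by (intro eventually_nhds_in_open) auto
  then have ev: "\<forall>\<^sub>F h in nhds 0. H (shift_coord Ce d j h E) (shift_coord Cf d j h F) (shift_coord Ck d j h K)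
      = (\<Sum>i\<in>I. c i * trace (refl_prod (shift_coord Ce d j h E) (shift_coord Cf d j h F) (shift_coord Ck d j h K) js (zs i)))"
  proof (rule eventually_mono)
    fix h :: complex assume "h \<in> ball 0 (norm (K j))"
    then have "K j + h \<noteq> 0" by (metis add_eq_0_iff mem_ball_0 norm_minus_cancel order_less_irrefl)
    then have "\<forall>m\<in>set js. shift_coord Ck d j h K m \<noteq> 0" using assms(3) by (simp add: shift_coord_def)
    then show "H (shift_coord Ce d j h E) (shift_coord Cf d j h F) (shift_coord Ck d j h K) =
      (\<Sum>i\<in>I. c i * trace (refl_prod (shift_coord Ce d j h E) (shift_coord Cf d j h F) (shift_coord Ck d j h K) js (zs i)))"
      using H by blast
  qed
  moreover have der: "((\<lambda>h. \<Sum>i\<in>I. c i * trace (refl_prod (shift_coord Ce d j h E) (shift_coord Cf d j h F)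
        (shift_coord Ck d j h K) js (zs i))) has_field_derivative
      (\<Sum>i\<in>I. c i * trace (refl_prod_grad E F K js (zs i) j d))) (at 0)"
    using assms(2-4) by (intro DERIV_sum DERIV_cmult has_field_derivative_trace_refl_prod)
  ultimately show ?thesis using DERIV_cong_ev[OF refl ev refl] by simp
qed

lemma partial_derivatives_trace_combination:
  assumes "\<forall>E F K. (\<forall>m\<in>set js. K m \<noteq> 0) \<longrightarrow> H E F K = (\<Sum>i\<in>I. c i * trace (refl_prod E F K js (zs i)))"
    and "distinct js" "\<forall>m\<in>set js. K m \<noteq> 0" "j \<in> set js"
  shows "dE H E F K j = (\<Sum>i\<in>I. c i * trace (refl_prod_grad E F K js (zs i) j Ce))"
    and "dF H E F K j = (\<Sum>i\<in>I. c i * trace (refl_prod_grad E F K js (zs i) j Cf))"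
    and "dK H E F K j = (\<Sum>i\<in>I. c i * trace (refl_prod_grad E F K js (zs i) j Ck))"
proof -
  note deriv = DERIV_imp_deriv[OF has_field_derivative_trace_combination[OF assms, of _ E F]]
  show "dE H E F K j = (\<Sum>i\<in>I. c i * trace (refl_prod_grad E F K js (zs i) j Ce))"
    using deriv[of Ce] by (simp add: dE_def shift_coord_def)
  show "dF H E F K j = (\<Sum>i\<in>I. c i * trace (refl_prod_grad E F K js (zs i) j Cf))"
    using deriv[of Cf] by (simp add: dF_def shift_coord_def)
  show "dK H E F K j = (\<Sum>i\<in>I. c i * trace (refl_prod_grad E F K js (zs i) j Ck))"
    using deriv[of Ck] by (simp add: dK_def shift_coord_def)
qed

lemma trace_refl_prod_deriv_hamiltonian:
  assumes H: "\<forall>E F K. (\<forall>m\<in>set js. K m \<noteq> 0) \<longrightarrow> H E F K = (\<Sum>i\<in>I. c i * trace (refl_prod E F K js (zs i)))"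
    and "distinct js" "\<forall>j\<in>set js. K j \<noteq> 0 \<and> a j \<noteq> 0" "\<xi> \<noteq> 0" "z \<noteq> 0"
    and nodes: "\<forall>i\<in>I. zs i \<noteq> 0 \<and> z / zs i - zs i / z \<noteq> 0 \<and> z * zs i - inverse (z * zs i) \<noteq> 0"
  shows "trace (refl_prod_deriv E F K js z (hamE H E F K) (hamF H E F K) (hamK H E F K)) = 0"
proof -
  \<comment> \<open>\<open>{tr U(z), H} = \<Sum>i. c i {tr U(z), tr U(zs i)}\<close>, and every summand vanishes by involution\<close>
  let ?g = "\<lambda>w j d. trace (refl_prod_grad E F K js w j d)"
  have K: "\<forall>m\<in>set js. K m \<noteq> 0" using assms(3) by blast
  have "trace (refl_prod_deriv E F K js z (hamE H E F K) (hamF H E F K) (hamK H E F K))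
      = (\<Sum>j\<in>set js. site_bracket (E j) (F j) (K j) (?g z j) (\<lambda>d. \<Sum>i\<in>I. c i * ?g (zs i) j d))"
    unfolding trace_refl_prod_deriv
  proof (rule sum.cong[OF refl])
    fix j assume "j \<in> set js"
    note partial = partial_derivatives_trace_combination[OF H assms(2) K this]
    show "hamE H E F K j * ?g z j Ce + hamF H E F K j * ?g z j Cf + hamK H E F K j * ?g z j Ck
      = site_bracket (E j) (F j) (K j) (?g z j) (\<lambda>d. \<Sum>i\<in>I. c i * ?g (zs i) j d)"
      by (simp add: hamE_def hamF_def hamK_def partial site_bracket_def algebra_simps)
  qed
  also have "\<dots> = (\<Sum>i\<in>I. c i * (\<Sum>j\<in>set js. site_bracket (E j) (F j) (K j) (?g z j) (?g (zs i) j)))"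
    by (simp add: site_bracket_sum_right sum_distrib_left sum.swap[of _ "set js"])
  also have "\<dots> = 0"
    using nodes assms(2-5) by (simp add: trace_refl_prod_grad_involution)
  finally show ?thesis .
qed

lemma trace_refl_prod_constant_on_flow:
  assumes H: "\<forall>E F K. ambient N K \<longrightarrow> H E F K = (\<Sum>i\<in>I. c i * trace (refl_prod E F K [1..<N+1] (zs i)))"
    and "\<xi> \<noteq> 0" "\<forall>j\<in>{1..N}. a j \<noteq> 0" "z \<noteq> 0"
    and nodes: "\<forall>i\<in>I. zs i \<noteq> 0 \<and> z / zs i - zs i / z \<noteq> 0 \<and> z * zs i - inverse (z * zs i) \<noteq> 0"
    and flow: "ham_flow_curve N tt H gE gF gK lo hi" and "s \<in> {lo..hi}"
  shows "trace (refl_prod (gE s) (gF s) (gK s) [1..<N+1] z) = trace (refl_prod (gE lo) (gF lo) (gK lo) [1..<N+1] z)"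
proof -
  let ?js = "[1..<N+1]" and ?tr = "\<lambda>t. trace (refl_prod (gE t) (gF t) (gK t) [1..<N+1] z)"
  have set_js: "set ?js = {1..N}" by auto
  have H': "\<forall>E F K. (\<forall>m\<in>set ?js. K m \<noteq> 0) \<longrightarrow> H E F K = (\<Sum>i\<in>I. c i * trace (refl_prod E F K ?js (zs i)))"
    using H unfolding set_js ambient_def .
  have "(?tr has_derivative (\<lambda>h. 0)) (at t within {lo..hi})" if "t \<in> {lo..hi}" for t
  proof -
    let ?E = "gE t" and ?F = "gF t" and ?K = "gK t"
    have K: "\<forall>j\<in>set ?js. ?K j \<noteq> 0 \<and> a j \<noteq> 0"
      using flow that assms(3) by (auto simp: ham_flow_curve_def in_leaf_def ambient_def)
    have "has_matrix_derivative of_real (\<lambda>t. refl_prod (gE t) (gF t) (gK t) ?js z)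
        (refl_prod_deriv ?E ?F ?K ?js z (hamE H ?E ?F ?K) (hamF H ?E ?F ?K) (hamK H ?E ?F ?K)) t {lo..hi}"
      using flow that K by (intro has_matrix_derivative_refl_prod)
        (auto simp: ham_flow_curve_def has_vector_derivative_def scaleR_conv_of_real)
    moreover have "trace (refl_prod_deriv ?E ?F ?K ?js z (hamE H ?E ?F ?K) (hamF H ?E ?F ?K) (hamK H ?E ?F ?K)) = 0"
      using K nodes assms(2,4) by (intro trace_refl_prod_deriv_hamiltonian[OF H']) auto
    ultimately show ?thesis using has_derivative_trace by fastforce
  qed
  then obtain C where "\<forall>t\<in>{lo..hi}. ?tr t = C"
    using has_derivative_zero_constant[of "{lo..hi}" ?tr] by auto
  then show ?thesis using assms(7) by auto
qed

lemma refl_prod_eq_foldr: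
  "foldr (\<lambda>j M. Lax E F K j (a j * z) ** M) js (mat 1) ** Kmat \<xi> z **
     foldr (\<lambda>j M. M ** Lax E F K j (z / a j)) js (mat 1) = refl_prod E F K js z"
proof (induction js)
  case (Cons i js)
  show ?case
    by (simp only: refl_prod.simps(2) flip: Cons.IH) (simp add: matrix_mul_assoc Lax_eq_lax)
qed simp

lemma monodromy_eq_refl_prod:
  "monodromy N a \<xi> E F K z = smult_mat (1 / (z - inverse z)) (refl_prod E F K [1..<N+1] z)"
  by (simp add: monodromy_def refl_prod_eq_foldr smult_mat_def)

lemma tfun_eq_trace_refl_prod:
  "tfun N a \<xi> E F K z = 1 / (z - inverse z) / 2 * trace (refl_prod E F K [1..<N+1] z)"
proof -
  have "(c * x + c * y) / 2 = c / 2 * (x + y)" for c x y :: complex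
    by (simp add: algebra_simps)
  then show ?thesis
    unfolding tfun_def monodromy_eq_refl_prod smult_mat_nth trace_2 .
qed

lemma det_refl_prod_eq:
  assumes "\<forall>j\<in>set js. K j \<noteq> 0 \<and> K' j \<noteq> 0 \<and> a j \<noteq> 0 \<and> casimir E F K j = casimir E' F' K' j" "z \<noteq> 0"
  shows "det (refl_prod E F K js z) = det (refl_prod E' F' K' js z)"
  using assms(1)
proof (induction js)
  case (Cons i js)
  then have "K i \<noteq> 0" "K' i \<noteq> 0" "a i * z \<noteq> 0" "z / a i \<noteq> 0" "casimir E F K i = casimir E' F' K' i"
    using assms(2) by auto
  with Cons show ?case by (simp add: det_mul det_lax casimir_def)
qed simp

end

lemma poly_laurent_sym_poly_eq_tfun:
  fixes P :: "nat \<Rightarrow> (nat \<Rightarrow> complex) \<Rightarrow> (nat \<Rightarrow> complex) \<Rightarrow> (nat \<Rightarrow> complex) \<Rightarrow> complex"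
  assumes P_def: "\<forall>E F K z. ambient N K \<and> z \<noteq> 0 \<and> z ^ 2 \<noteq> 1 \<and> z ^ 2 \<noteq> -1 \<longrightarrow>
          tfun N a \<xi> E F K z =
            (1/2) * ((z^2 + 1) / (z^2 - 1)) *
              ((\<Sum>j=1..N. P j E F K * ((z^2)^j + inverse (z^2)^j) / 2) + P 0 E F K)"
    and node: "ambient N K \<and> z \<noteq> 0 \<and> z ^ 2 \<noteq> 1 \<and> z ^ 2 \<noteq> -1"
  shows "poly (laurent_sym_poly N (\<lambda>j. P j E F K)) (z ^ 2)
           = (z ^ 2) ^ N * (2 * (z ^ 2 - 1) / (z ^ 2 + 1)) * tfun N a \<xi> E F K z"
proof -
  let ?w = "z ^ 2" and ?S = "(\<Sum>j=1..N. P j E F K * ((z ^ 2) ^ j + inverse (z ^ 2) ^ j) / 2) + P 0 E F K"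
  have w: "?w \<noteq> 0" "?w - 1 \<noteq> 0" "?w + 1 \<noteq> 0"
    using node by (auto simp: add_eq_0_iff2)
  have "2 * (?w - 1) / (?w + 1) * (1/2 * ((?w + 1) / (?w - 1))) = 1"
    using w(2,3) by simp
  then have "poly (laurent_sym_poly N (\<lambda>j. P j E F K)) ?w
      = ?w ^ N * (2 * (?w - 1) / (?w + 1) * (1/2 * ((?w + 1) / (?w - 1)))) * ?S"
    by (simp only: poly_laurent_sym_poly[OF w(1)] mult_1_right)
  also have "\<dots> = ?w ^ N * (2 * (?w - 1) / (?w + 1)) * tfun N a \<xi> E F K z"
    by (simp only: P_def[rule_format, OF node] mult.assoc)
  finally show ?thesis .
qed

text \<open>The coefficient of \<open>w\<^sup>N\<^sup>+\<^sup>k\<close> of \<open>laurent_sym_poly N P\<close> is \<open>P k\<close> (halved for \<open>k > 0\<close>), and interpolation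
  at the nodes expresses this coefficient linearly through the values \<open>t(zs i)\<close>.\<close>
lemma hamiltonian_eq_sum_tfun:
  fixes P :: "nat \<Rightarrow> (nat \<Rightarrow> complex) \<Rightarrow> (nat \<Rightarrow> complex) \<Rightarrow> (nat \<Rightarrow> complex) \<Rightarrow> complex"
  assumes P_def: "\<forall>E F K z. ambient N K \<and> z \<noteq> 0 \<and> z ^ 2 \<noteq> 1 \<and> z ^ 2 \<noteq> -1 \<longrightarrow>
          tfun N a \<xi> E F K z =
            (1/2) * ((z^2 + 1) / (z^2 - 1)) *
              ((\<Sum>j=1..N. P j E F K * ((z^2)^j + inverse (z^2)^j) / 2) + P 0 E F K)"
    and "k \<le> N"
    and inj: "inj_on (\<lambda>i. zs i ^ 2) {..2*N}"
    and nodes: "\<forall>i\<le>2*N. zs i \<noteq> 0 \<and> zs i ^ 2 \<noteq> 1 \<and> zs i ^ 2 \<noteq> -1"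
  obtains \<mu> where "\<forall>E F K. ambient N K \<longrightarrow> P k E F K = (\<Sum>i\<le>2*N. \<mu> i * tfun N a \<xi> E F K (zs i))"
proof -
  obtain wt where wt: "\<And>q m. degree q \<le> 2*N \<Longrightarrow> coeff q m = (\<Sum>i\<le>2*N. poly q (zs i ^ 2) * wt i m)"
    using lagrange_coeff_weights[OF inj] by blast
  define \<mu> where "\<mu> i = (if k = 0 then 1 else 2) * ((zs i ^ 2) ^ N * (2 * (zs i ^ 2 - 1) / (zs i ^ 2 + 1)))
    * wt i (N + k)" for i
  show ?thesis
  proof (intro that allI impI)
    fix E F K assume "ambient N K"
    let ?q = "laurent_sym_poly N (\<lambda>j. P j E F K)"
    have "P k E F K = (if k = 0 then 1 else 2) * coeff ?q (N + k)"
      using coeff_laurent_sym_poly[OF \<open>k \<le> N\<close>] by simp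
    also have "\<dots> = (if k = 0 then 1 else 2) * (\<Sum>i\<le>2*N. poly ?q (zs i ^ 2) * wt i (N + k))"
      by (simp only: wt[OF degree_laurent_sym_poly])
    also have "\<dots> = (\<Sum>i\<le>2*N. \<mu> i * tfun N a \<xi> E F K (zs i))"
      unfolding sum_distrib_left using \<open>ambient N K\<close> nodes
      by (intro sum.cong refl) (simp add: poly_laurent_sym_poly_eq_tfun[OF P_def] \<mu>_def)
    finally show "P k E F K = (\<Sum>i\<le>2*N. \<mu> i * tfun N a \<xi> E F K (zs i))" .
  qed
qed

lemma trace_refl_prod_invariant:
  fixes P :: "nat \<Rightarrow> (nat \<Rightarrow> complex) \<Rightarrow> (nat \<Rightarrow> complex) \<Rightarrow> (nat \<Rightarrow> complex) \<Rightarrow> complex"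
  assumes "\<xi> \<noteq> 0" "\<forall>j\<in>{1..N}. a j \<noteq> 0"
    and P_def: "\<forall>E F K z. ambient N K \<and> z \<noteq> 0 \<and> z ^ 2 \<noteq> 1 \<and> z ^ 2 \<noteq> -1 \<longrightarrow>
          tfun N a \<xi> E F K z =
            (1/2) * ((z^2 + 1) / (z^2 - 1)) *
              ((\<Sum>j=1..N. P j E F K * ((z^2)^j + inverse (z^2)^j) / 2) + P 0 E F K)"
    and "k \<le> N" and flow: "ham_flow_curve N tt (P k) gE gF gK lo hi" and "s \<in> {lo..hi}" and "z \<noteq> 0"
  shows "trace (refl_prod a \<xi> (gE s) (gF s) (gK s) [1..<N+1] z)
       = trace (refl_prod a \<xi> (gE lo) (gF lo) (gK lo) [1..<N+1] z)"
proof -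
  obtain zs where inj: "inj_on (\<lambda>i. zs i ^ 2) {..2*N}"
    and nodes: "\<forall>i\<le>2*N. zs i \<noteq> 0 \<and> zs i ^ 2 \<noteq> 1 \<and> zs i ^ 2 \<noteq> -1
                   \<and> z / zs i - zs i / z \<noteq> 0 \<and> z * zs i - inverse (z * zs i) \<noteq> 0"
    by (rule interpolation_nodes_exist[OF \<open>z \<noteq> 0\<close>])
  have "\<forall>i\<le>2*N. zs i \<noteq> 0 \<and> zs i ^ 2 \<noteq> 1 \<and> zs i ^ 2 \<noteq> -1"
    using nodes by simp
  then obtain \<mu> where "\<forall>E F K. ambient N K \<longrightarrow> P k E F K = (\<Sum>i\<le>2*N. \<mu> i * tfun N a \<xi> E F K (zs i))"
    by (rule hamiltonian_eq_sum_tfun[OF P_def \<open>k \<le> N\<close> inj])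
  then have "\<forall>E F K. ambient N K \<longrightarrow> P k E F K = (\<Sum>i\<in>{..2*N}.
      (\<mu> i * (1 / (zs i - inverse (zs i)) / 2)) * trace (refl_prod a \<xi> E F K [1..<N+1] (zs i)))"
    by (simp only: tfun_eq_trace_refl_prod mult.assoc)
  then show ?thesis
    by (rule trace_refl_prod_constant_on_flow[OF _ assms(1,2) \<open>z \<noteq> 0\<close> _ flow \<open>s \<in> {lo..hi}\<close>])
      (use nodes in auto)
qed

theorem mainTheorem3:
  fixes N :: nat and tt :: "nat \<Rightarrow> complex" and \<xi> :: complex and a :: "nat \<Rightarrow> complex"
    and P :: "nat \<Rightarrow> (nat \<Rightarrow> complex) \<Rightarrow> (nat \<Rightarrow> complex) \<Rightarrow> (nat \<Rightarrow> complex) \<Rightarrow> complex"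
    and gE gF gK :: "real \<Rightarrow> nat \<Rightarrow> complex" and lo hi :: real and k :: nat
  assumes "N \<ge> 1" and "\<xi> \<noteq> 0" and "\<forall>j\<in>{1..N}. a j \<noteq> 0"
    and P_def: "\<forall>E F K z. ambient N K \<and> z \<noteq> 0 \<and> z ^ 2 \<noteq> 1 \<and> z ^ 2 \<noteq> -1 \<longrightarrow>
          tfun N a \<xi> E F K z =
            (1/2) * ((z^2 + 1) / (z^2 - 1)) *
              ((\<Sum>j=1..N. P j E F K * ((z^2)^j + inverse (z^2)^j) / 2) + P 0 E F K)"
    and "k \<le> N"
    and "lo \<le> hi"
    and "ham_flow_curve N tt (P k) gE gF gK lo hi"
  shows "\<forall>s\<in>{lo..hi}. \<forall>z \<zeta>. z \<noteq> 0 \<and> z ^ 2 \<noteq> 1 \<longrightarrow>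
           det (mat \<zeta> - monodromy N a \<xi> (gE s) (gF s) (gK s) z)
         = det (mat \<zeta> - monodromy N a \<xi> (gE lo) (gF lo) (gK lo) z)"
proof (intro ballI allI impI)
  fix s :: real and z \<zeta> :: complex assume s: "s \<in> {lo..hi}" and "z \<noteq> 0 \<and> z ^ 2 \<noteq> 1"
  \<comment> \<open>\<open>N \<ge> 1\<close> and \<open>z\<^sup>2 \<noteq> 1\<close> are not needed; at \<open>z\<^sup>2 = 1\<close> the normalising factor is the junk value \<open>1/0 = 0\<close>\<close>
  then have "z \<noteq> 0" by simp
  have trace_eq: "trace (refl_prod a \<xi> (gE s) (gF s) (gK s) [1..<N+1] z)
      = trace (refl_prod a \<xi> (gE lo) (gF lo) (gK lo) [1..<N+1] z)"
    by (rule trace_refl_prod_invariant[OF assms(2,3) P_def assms(5,7) s \<open>z \<noteq> 0\<close>])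
  have "in_leaf N tt (gE t) (gF t) (gK t)" if "t \<in> {lo..hi}" for t
    using assms(7) that unfolding ham_flow_curve_def by blast
  then have "in_leaf N tt (gE s) (gF s) (gK s)" "in_leaf N tt (gE lo) (gF lo) (gK lo)"
    using assms(6) s by auto
  then have det_eq: "det (refl_prod a \<xi> (gE s) (gF s) (gK s) [1..<N+1] z)
      = det (refl_prod a \<xi> (gE lo) (gF lo) (gK lo) [1..<N+1] z)"
    using assms(3) \<open>z \<noteq> 0\<close> by (intro det_refl_prod_eq) (auto simp: in_leaf_def ambient_def)
  show "det (mat \<zeta> - monodromy N a \<xi> (gE s) (gF s) (gK s) z)
      = det (mat \<zeta> - monodromy N a \<xi> (gE lo) (gF lo) (gK lo) z)"
    by (simp only: monodromy_eq_refl_prod det_mat_minus_smult_mat trace_eq det_eq)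
qed

end
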